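(* There is a streaming algorithm that, given $\varepsilon\in(0,\tfrac12)$ and $\alpha,\delta\in(0,1)$, obtains with probability at least $1-\delta$ a $(1\pm\varepsilon)$-approximation to $F_1$ of the final frequency vector in the $\alpha$-RFDS model, using $O\!\left(\frac{1}{1-\alpha}\cdot\frac{1}{\varepsilon^2}\log n\log\frac{1}{\delta}\right)$ bits of space.
   Context: Forget model: the universe is $[n]$; the stream (of length $m=\mathrm{poly}(n)$) consists of insertions $(i,+)$, which increment coordinate $i$, and forget requests on an index $i$, which set coordinate $i$ of the current frequency vector to $0$. $\mathbf{g}$ is the final vector after all operations; $\mathbf{f}$ is the final vector if all forget requests are removed. $F_1(\mathbf{v})=\sum_i|v_i|$. The $\alpha$-RFDS model is the promise $F_1(\mathbf{g})\ge(1-\alpha)F_1(\mathbf{f})$. *)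

theory Defs
  imports "HOL-Probability.Probability"
begin

datatype sop = Ins nat | Forget nat

fun apply_op :: "(nat \<Rightarrow> int) \<Rightarrow> sop \<Rightarrow> (nat \<Rightarrow> int)" where
  "apply_op v (Ins i) = v(i := v i + 1)"
| "apply_op v (Forget i) = v(i := 0)"

definition freq_g :: "sop list \<Rightarrow> nat \<Rightarrow> int" where
  "freq_g xs = foldl apply_op (\<lambda>_. 0) xs"

definition freq_f :: "sop list \<Rightarrow> nat \<Rightarrow> int" where
  "freq_f xs = freq_g (filter (\<lambda>a. case a of Ins _ \<Rightarrow> True | Forget _ \<Rightarrow> False) xs)"

definition F1 :: "nat \<Rightarrow> (nat \<Rightarrow> int) \<Rightarrow> real" where
  "F1 n v = (\<Sum>i<n. real_of_int \<bar>v i\<bar>)"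

definition valid_stream :: "nat \<Rightarrow> sop list \<Rightarrow> bool" where
  "valid_stream n xs \<longleftrightarrow> (\<forall>a\<in>set xs. case a of Ins i \<Rightarrow> i < n | Forget i \<Rightarrow> i < n)"

definition rfds :: "real \<Rightarrow> nat \<Rightarrow> sop list \<Rightarrow> bool" where
  "rfds \<alpha> n xs \<longleftrightarrow> F1 n (freq_g xs) \<ge> (1 - \<alpha>) * F1 n (freq_f xs)"

record stream_alg =
  init :: "nat pmf"
  step :: "nat \<Rightarrow> sop \<Rightarrow> nat pmf"
  out_fn :: "nat \<Rightarrow> real"

definition run_alg :: "stream_alg \<Rightarrow> sop list \<Rightarrow> nat pmf" where
  "run_alg A xs = foldl (\<lambda>p a. bind_pmf p (\<lambda>s. step A s a)) (init A) xs"

text \<open>The algorithm uses at most b bits of space: all states lie in {0..<2^b}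
  (states are b-bit strings), and this set is closed under transitions.\<close>
definition uses_bits :: "stream_alg \<Rightarrow> nat \<Rightarrow> bool" where
  "uses_bits A b \<longleftrightarrow> set_pmf (init A) \<subseteq> {..<2^b} \<and>
     (\<forall>s<2^b. \<forall>a. set_pmf (step A s a) \<subseteq> {..<2^b})"

definition out_dist :: "stream_alg \<Rightarrow> sop list \<Rightarrow> real pmf" where
  "out_dist A xs = map_pmf (out_fn A) (run_alg A xs)"

end

(*
  The algorithm gives every stream position an independent uniform hash in [0, 2^L) and keeps,
  at its current level j, the multiset of surviving insertions whose hash is below 2^(L-j), i.e.
  a 2^-j-subsample of the insertions counted by F1(g). A forget request removes its index from
  the sample, which keeps the sample equal to that subsample. Whenever more than cap items are
  stored the level is raised, and the estimate is 2^j times the sample size.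

  The promise F1(g) >= (1-alpha) F1(f) lets us pick a level js at which the subsample of all
  insertions has expected size O(log(1/delta) / ((1-alpha) eps^2)), while the subsample of the
  survivors still has expected size at least 2^(js-j) log(1/delta) / eps^2 at every level
  j <= js. By Chernoff bounds, with probability 1 - delta/2 the sketch never rises above js,
  and every level it may end on gives a (1 +- eps)-estimate, the failure probabilities of the
  levels decaying geometrically. A state stores a level and at most cap pairs (index, hash);
  as the stream has length at most n^k, hashes of O(k log n) bits suffice.
*)
theory Submission
  imports Defs
begin

section \<open>Frequency vectors as counts of stream positions\<close>

fun sop_index :: "sop \<Rightarrow> nat" where
  "sop_index (Ins i) = i"
| "sop_index (Forget i) = i"

fun is_Ins :: "sop \<Rightarrow> bool" where
  "is_Ins (Ins _) = True"
| "is_Ins (Forget _) = False"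

definition survives :: "sop list \<Rightarrow> nat \<Rightarrow> bool" where
  "survives xs p \<longleftrightarrow> p < length xs \<and> is_Ins (xs ! p) \<and>
     (\<forall>q. p < q \<and> q < length xs \<longrightarrow> xs ! q \<noteq> Forget (sop_index (xs ! p)))"

lemma survives_snoc:
  "survives (xs @ [a]) p \<longleftrightarrow>
     (survives xs p \<and> a \<noteq> Forget (sop_index (xs ! p))) \<or> (p = length xs \<and> is_Ins a)"
  unfolding survives_def by (auto simp: nth_append less_Suc_eq)

lemma survives_less_length: "survives xs p \<Longrightarrow> p < length xs"
  by (simp add: survives_def)

lemma not_survives_length [simp]: "\<not> survives xs (length xs)"
  by (simp add: survives_def)

lemma finite_survivors: "finite {p. survives xs p \<and> Q p}"
  by (rule finite_subset[of _ "{..<length xs}"]) (auto dest: survives_less_length)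

lemma freq_g_snoc: "freq_g (xs @ [a]) = apply_op (freq_g xs) a"
  by (simp add: freq_g_def)

lemma freq_g_eq_card_survivors:
  "freq_g xs i = int (card {p. survives xs p \<and> sop_index (xs ! p) = i})"
proof (induction xs rule: rev_induct)
  case Nil
  then show ?case by (simp add: freq_g_def survives_def)
next
  case (snoc a xs)
  let ?S = "\<lambda>ys. {p. survives ys p \<and> sop_index (ys ! p) = i}"
  show ?case
  proof (cases a)
    case (Ins j)
    then have "?S (xs @ [a]) = (if j = i then insert (length xs) (?S xs) else ?S xs)"
      by (auto simp: survives_snoc nth_append dest: survives_less_length)
    moreover have "length xs \<notin> ?S xs"
      by (auto dest: survives_less_length)
    ultimately show ?thesis
      using snoc Ins finite_survivors[of xs "\<lambda>p. sop_index (xs ! p) = i"]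
      by (cases "j = i") (simp_all add: freq_g_snoc)
  next
    case (Forget j)
    then have "?S (xs @ [a]) = (if j = i then {} else ?S xs)"
      by (auto simp: survives_snoc nth_append dest: survives_less_length)
    then show ?thesis
      using snoc Forget by (simp add: freq_g_snoc)
  qed
qed

lemma freq_f_eq_card_Ins:
  "freq_f xs i = int (card {p. p < length xs \<and> xs ! p = Ins i})"
proof (induction xs rule: rev_induct)
  case Nil
  then show ?case by (simp add: freq_f_def freq_g_def)
next
  case (snoc a xs)
  have "{p. p < length (xs @ [a]) \<and> (xs @ [a]) ! p = Ins i} =
      (if a = Ins i then insert (length xs) else id) {p. p < length xs \<and> xs ! p = Ins i}"
    by (auto simp: nth_append less_Suc_eq)
  then show ?case
    using snoc by (cases a) (auto simp: freq_f_def freq_g_def)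
qed

lemma card_eq_sum_card_fibres:
  fixes g :: "'a \<Rightarrow> nat"
  assumes "finite P" "g ` P \<subseteq> {..<n}"
  shows "real (card P) = (\<Sum>i<n. real (card {p \<in> P. g p = i}))"
  using sum_fun_comp[OF assms(1) finite_lessThan assms(2), where f = "\<lambda>_. 1::real"] by simp

lemma valid_stream_index_less:
  "valid_stream n xs \<Longrightarrow> p < length xs \<Longrightarrow> sop_index (xs ! p) < n"
  unfolding valid_stream_def by (cases "xs ! p") (auto dest!: nth_mem bspec)

lemma F1_freq_g:
  assumes "valid_stream n xs"
  shows "F1 n (freq_g xs) = card {p. survives xs p}"
  unfolding F1_def freq_g_eq_card_survivors
  using card_eq_sum_card_fibres[of "{p. survives xs p}" "\<lambda>p. sop_index (xs ! p)" n]
    finite_survivors[of xs "\<lambda>_. True"] valid_stream_index_less[OF assms]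
  by (fastforce dest: survives_less_length)

lemma F1_freq_f:
  assumes "valid_stream n xs"
  shows "F1 n (freq_f xs) = card {p. p < length xs \<and> is_Ins (xs ! p)}"
proof -
  have "{p. p < length xs \<and> xs ! p = Ins i} =
      {p \<in> {p. p < length xs \<and> is_Ins (xs ! p)}. sop_index (xs ! p) = i}" for i
    by (auto elim: is_Ins.elims)
  then show ?thesis
    unfolding F1_def freq_f_eq_card_Ins
    using card_eq_sum_card_fibres[of "{p. p < length xs \<and> is_Ins (xs ! p)}" "\<lambda>p. sop_index (xs ! p)" n]
      valid_stream_index_less[OF assms]
    by fastforce
qed

section \<open>Randomized algorithms with finitely many states\<close>

definition run_states :: "'s \<Rightarrow> ('s \<Rightarrow> sop \<Rightarrow> 's pmf) \<Rightarrow> sop list \<Rightarrow> 's pmf" where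
  "run_states s0 transition xs = foldl (\<lambda>p a. bind_pmf p (\<lambda>s. transition s a)) (return_pmf s0) xs"

lemma run_states_snoc:
  "run_states s0 transition (xs @ [a]) = bind_pmf (run_states s0 transition xs) (\<lambda>s. transition s a)"
  by (simp add: run_states_def)

definition run_presampled ::
    "('s \<Rightarrow> sop \<Rightarrow> 'u \<Rightarrow> 's) \<Rightarrow> 's \<Rightarrow> sop list \<Rightarrow> (nat \<Rightarrow> 'u) \<Rightarrow> 's" where
  "run_presampled f s0 xs h = foldl (\<lambda>s (a, u). f s a u) s0 (zip xs (map h [0..<length xs]))"

lemma run_presampled_Nil [simp]: "run_presampled f s0 [] h = s0"
  by (simp add: run_presampled_def)

lemma run_presampled_snoc:
  "run_presampled f s0 (xs @ [a]) h = f (run_presampled f s0 xs h) a (h (length xs))"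
  by (simp add: run_presampled_def)

lemma run_presampled_cong:
  assumes "\<And>p. p < length xs \<Longrightarrow> h p = h' p"
  shows "run_presampled f s0 xs h = run_presampled f s0 xs h'"
proof -
  have "map h [0..<length xs] = map h' [0..<length xs]"
    using assms by (intro map_cong) auto
  then show ?thesis
    by (simp only: run_presampled_def)
qed

lemma run_states_eq_presampled:
  "run_states s0 (\<lambda>s a. map_pmf (f s a) D) xs =
     map_pmf (run_presampled f s0 xs) (Pi_pmf {..<length xs} d (\<lambda>_. D))"
proof (induction xs rule: rev_induct)
  case Nil
  then show ?case by (simp add: run_states_def)
next
  case (snoc a xs)
  let ?m = "length xs" and ?H = "Pi_pmf {..<length xs} d (\<lambda>_. D)"
  have "Pi_pmf {..<Suc ?m} d (\<lambda>_. D) = do {u \<leftarrow> D; h \<leftarrow> ?H; return_pmf (h(?m := u))}"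
    unfolding lessThan_Suc by (rule Pi_pmf_insert') auto
  then have "map_pmf (run_presampled f s0 (xs @ [a])) (Pi_pmf {..<Suc ?m} d (\<lambda>_. D))
      = bind_pmf D (\<lambda>u. bind_pmf ?H (\<lambda>h. return_pmf (f (run_presampled f s0 xs h) a u)))"
    by (simp add: map_bind_pmf run_presampled_snoc run_presampled_cong[of xs "h(?m := u)" h for h u])
  also have "\<dots> = bind_pmf ?H (\<lambda>h. bind_pmf D (\<lambda>u. return_pmf (f (run_presampled f s0 xs h) a u)))"
    by (rule bind_commute_pmf)
  also have "\<dots> = bind_pmf (map_pmf (run_presampled f s0 xs) ?H) (\<lambda>s. map_pmf (f s a) D)"
    by (simp only: bind_map_pmf) (simp add: map_pmf_def)
  finally show ?case
    using snoc by (simp add: run_states_snoc)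
qed

locale finite_state_alg =
  fixes states :: "'s set" and s0 :: 's and transition :: "'s \<Rightarrow> sop \<Rightarrow> 's pmf"
  assumes finite_states: "finite states"
    and init_in_states: "s0 \<in> states"
    and transition_in_states: "s \<in> states \<Longrightarrow> set_pmf (transition s a) \<subseteq> states"
begin

definition encode :: "'s \<Rightarrow> nat" where
  "encode = (SOME e. bij_betw e states {0..<card states})"

abbreviation decode :: "nat \<Rightarrow> 's" where
  "decode \<equiv> inv_into states encode"

definition as_stream_alg :: "('s \<Rightarrow> real) \<Rightarrow> stream_alg" where
  "as_stream_alg out =
     \<lparr> init = return_pmf (encode s0),
       step = (\<lambda>c a. if c < card states then map_pmf encode (transition (decode c) a) else return_pmf 0),
       out_fn = out \<circ> decode \<rparr>"

lemma bij_encode: "bij_betw encode states {0..<card states}"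
  unfolding encode_def by (rule someI_ex[OF ex_bij_betw_finite_nat[OF finite_states]])

lemma encode_less: "s \<in> states \<Longrightarrow> encode s < card states"
  using bij_encode by (auto dest: bij_betwE)

lemma decode_encode: "s \<in> states \<Longrightarrow> decode (encode s) = s"
  using bij_encode by (simp add: bij_betw_def)

lemma decode_in_states: "c < card states \<Longrightarrow> decode c \<in> states"
  using bij_encode by (metis atLeastLessThan_iff bij_betw_imp_surj_on inv_into_into zero_le)

lemma set_pmf_run_states: "set_pmf (run_states s0 transition xs) \<subseteq> states"
proof (induction xs rule: rev_induct)
  case Nil
  then show ?case by (simp add: run_states_def init_in_states)
next
  case (snoc a xs)
  then show ?case using transition_in_states by (fastforce simp: run_states_snoc)
qed

lemma run_alg_as_stream_alg:
  "run_alg (as_stream_alg out) xs = map_pmf encode (run_states s0 transition xs)"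
proof (induction xs rule: rev_induct)
  case Nil
  then show ?case by (simp add: run_alg_def run_states_def as_stream_alg_def)
next
  case (snoc a xs)
  have "step (as_stream_alg out) (encode s) a = map_pmf encode (transition s a)"
    if "s \<in> set_pmf (run_states s0 transition xs)" for s
  proof -
    have "s \<in> states" using that set_pmf_run_states by blast
    then show ?thesis by (simp add: as_stream_alg_def encode_less decode_encode)
  qed
  then show ?case
    using snoc by (simp add: run_alg_def run_states_def bind_map_pmf map_bind_pmf cong: bind_pmf_cong)
qed

lemma out_dist_as_stream_alg:
  "out_dist (as_stream_alg out) xs = map_pmf out (run_states s0 transition xs)"
  unfolding out_dist_def run_alg_as_stream_alg pmf.map_comp
  using set_pmf_run_states decode_encode
  by (intro map_pmf_cong) (auto simp: as_stream_alg_def subset_iff)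

lemma uses_bits_as_stream_alg:
  assumes "card states \<le> 2 ^ b"
  shows "uses_bits (as_stream_alg out) b"
proof -
  have encode_bound: "encode s < 2 ^ b" if "s \<in> states" for s
    using encode_less[OF that] assms by linarith
  have "set_pmf (map_pmf encode (transition (decode c) a)) \<subseteq> {..<2 ^ b}"
    if "c < card states" for c a
    using transition_in_states[OF decode_in_states[OF that]] encode_bound by auto
  then show ?thesis
    by (auto simp: uses_bits_def as_stream_alg_def encode_bound init_in_states)
qed

end

section \<open>Chernoff bounds for counts of independent events\<close>

lemma expectation_if_mem:
  fixes a b :: real
  shows "measure_pmf.expectation D (\<lambda>v. if v \<in> E then a else b) = b + (a - b) * measure_pmf.prob D E"
proof -
  have "(\<lambda>v. if v \<in> E then a else b) = (\<lambda>v. b + (a - b) * indicator E v)"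
    by (auto simp: indicator_def)
  then show ?thesis
    by (simp add: measure_pmf.integrable_const_bound[where B = 1])
qed

lemma exp_minus_le_quadratic:
  fixes x :: real
  assumes "0 \<le> x"
  shows "exp (- x) \<le> 1 - x + x\<^sup>2 / 2"
proof -
  have pos: "0 < 1 + x + x\<^sup>2 / 2"
    using assms by (simp add: add_pos_nonneg)
  have "(1 + x + x\<^sup>2 / 2) * (1 - x + x\<^sup>2 / 2) = 1 + x ^ 4 / 4"
    by (simp add: algebra_simps power2_eq_square power4_eq_xxxx)
  then have "1 \<le> (1 + x + x\<^sup>2 / 2) * (1 - x + x\<^sup>2 / 2)"
    by simp
  then have "1 / (1 + x + x\<^sup>2 / 2) \<le> 1 - x + x\<^sup>2 / 2"
    using pos by (simp add: divide_le_eq mult.commute)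
  moreover have "exp (- x) \<le> 1 / (1 + x + x\<^sup>2 / 2)"
    using exp_lower_Taylor_quadratic[OF assms] pos by (simp add: exp_minus field_simps)
  ultimately show ?thesis by linarith
qed

context
  fixes D :: "'a pmf" and E :: "'a set" and I P :: "'i set" and d :: 'a
  assumes finite_I: "finite I" and P_subset: "P \<subseteq> I"
begin

abbreviation (input) count :: "('i \<Rightarrow> 'a) \<Rightarrow> real" where
  "count h \<equiv> real (card {p \<in> P. h p \<in> E})"

abbreviation (input) mean :: real where
  "mean \<equiv> real (card P) * measure_pmf.prob D E"

lemma exp_mult_count_eq_prod:
  "exp (s * count h) = (\<Prod>p\<in>I. if p \<in> P \<and> h p \<in> E then exp s else 1)"
proof -
  have "{p \<in> P. h p \<in> E} = {p \<in> I. p \<in> P \<and> h p \<in> E}"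
    using P_subset by blast
  then show ?thesis
    using finite_I by (simp add: exp_of_nat_mult[symmetric] mult.commute prod.inter_filter[symmetric])
qed

text \<open>The moment generating function of a count of independent events with common probability
  is dominated by that of a Poisson variable with the same mean.\<close>
lemma expectation_exp_count_le:
  "measure_pmf.expectation (Pi_pmf I d (\<lambda>_. D)) (\<lambda>h. exp (s * count h)) \<le> exp (mean * (exp s - 1))"
proof -
  let ?q = "measure_pmf.prob D E"
  have "measure_pmf.expectation (Pi_pmf I d (\<lambda>_. D)) (\<lambda>h. exp (s * count h))
      = (\<Prod>p\<in>I. measure_pmf.expectation D (\<lambda>v. if p \<in> P \<and> v \<in> E then exp s else 1))"
    unfolding exp_mult_count_eq_prod
    by (rule expectation_prod_Pi_pmf)
       (use finite_I in \<open>auto intro: measure_pmf.integrable_const_bound[where B = "exp s + 1"]\<close>)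
  also have "\<dots> = (\<Prod>p\<in>I. if p \<in> P then 1 + ?q * (exp s - 1) else 1)"
    by (intro prod.cong) (auto simp: expectation_if_mem algebra_simps)
  also have "\<dots> \<le> (\<Prod>p\<in>I. if p \<in> P then exp (?q * (exp s - 1)) else 1)"
  proof (intro prod_mono conjI)
    fix p
    have "0 \<le> (1 - ?q) + ?q * exp s"
      by simp
    then show "0 \<le> (if p \<in> P then 1 + ?q * (exp s - 1) else 1)"
      by (simp add: algebra_simps)
    show "(if p \<in> P then 1 + ?q * (exp s - 1) else 1) \<le> (if p \<in> P then exp (?q * (exp s - 1)) else 1)"
      using exp_ge_add_one_self[of "?q * (exp s - 1)"] by simp
  qed
  also have "\<dots> = exp (mean * (exp s - 1))"
    using finite_I P_subset
    by (simp add: prod.If_cases Int_absorb1 exp_of_nat_mult[symmetric] mult.assoc)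
  finally show ?thesis .
qed

lemma prob_count_tail_le:
  "measure_pmf.prob (Pi_pmf I d (\<lambda>_. D)) {h. exp (s * t) \<le> exp (s * count h)}
     \<le> exp (mean * (exp s - 1) - s * t)"
proof -
  let ?H = "Pi_pmf I d (\<lambda>_. D)"
  have "exp (s * count h) \<le> exp (\<bar>s\<bar> * real (card P))" for h
  proof -
    have "card {p \<in> P. h p \<in> E} \<le> card P"
      using finite_I P_subset by (intro card_mono) (auto dest: finite_subset)
    then have "s * count h \<le> \<bar>s\<bar> * real (card P)"
      by (intro mult_mono) auto
    then show ?thesis by simp
  qed
  then have "integrable ?H (\<lambda>h. exp (s * count h))"
    by (intro measure_pmf.integrable_const_bound[where B = "exp (\<bar>s\<bar> * real (card P))"]) auto
  then have "measure_pmf.prob ?H {h. exp (s * t) \<le> exp (s * count h)}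
      \<le> measure_pmf.expectation ?H (\<lambda>h. exp (s * count h)) / exp (s * t)"
    using integral_Markov_inequality_measure[of ?H "\<lambda>h. exp (s * count h)" UNIV "exp (s * t)"] by simp
  also have "\<dots> \<le> exp (mean * (exp s - 1)) / exp (s * t)"
    by (intro divide_right_mono expectation_exp_count_le) auto
  finally show ?thesis
    by (simp add: exp_diff)
qed

lemma chernoff_upper:
  assumes "0 < \<epsilon>" "\<epsilon> \<le> 1"
  shows "measure_pmf.prob (Pi_pmf I d (\<lambda>_. D)) {h. (1 + \<epsilon>) * mean \<le> count h}
           \<le> exp (- (\<epsilon>\<^sup>2 * mean / 4))"
proof -
  let ?s = "\<epsilon> / 2"
  have "{h. (1 + \<epsilon>) * mean \<le> count h} = {h. exp (?s * ((1 + \<epsilon>) * mean)) \<le> exp (?s * count h)}"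
    using assms by auto
  then have "measure_pmf.prob (Pi_pmf I d (\<lambda>_. D)) {h. (1 + \<epsilon>) * mean \<le> count h}
      \<le> exp (mean * (exp ?s - 1) - ?s * ((1 + \<epsilon>) * mean))"
    by (simp only: prob_count_tail_le)
  also have "\<dots> \<le> exp (- (\<epsilon>\<^sup>2 * mean / 4))"
  proof -
    have "exp ?s \<le> 1 + ?s + ?s\<^sup>2"
      using exp_bound[of ?s] assms by simp
    then have "mean * (exp ?s - 1) \<le> mean * (?s + ?s\<^sup>2)"
      by (intro mult_left_mono) auto
    moreover have "mean * (?s + ?s\<^sup>2) - ?s * ((1 + \<epsilon>) * mean) = - (\<epsilon>\<^sup>2 * mean / 4)"
      by (simp add: power2_eq_square field_simps)
    ultimately show ?thesis by simp
  qed
  finally show ?thesis .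
qed

lemma chernoff_lower:
  assumes "0 < \<epsilon>" "\<epsilon> \<le> 1"
  shows "measure_pmf.prob (Pi_pmf I d (\<lambda>_. D)) {h. count h \<le> (1 - \<epsilon>) * mean}
           \<le> exp (- (\<epsilon>\<^sup>2 * mean / 4))"
proof -
  let ?s = "- \<epsilon>"
  have "{h. count h \<le> (1 - \<epsilon>) * mean} = {h. exp (?s * ((1 - \<epsilon>) * mean)) \<le> exp (?s * count h)}"
    using assms by auto
  then have "measure_pmf.prob (Pi_pmf I d (\<lambda>_. D)) {h. count h \<le> (1 - \<epsilon>) * mean}
      \<le> exp (mean * (exp ?s - 1) - ?s * ((1 - \<epsilon>) * mean))"
    by (simp only: prob_count_tail_le)
  also have "\<dots> \<le> exp (- (\<epsilon>\<^sup>2 * mean / 4))"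
  proof -
    have "mean * (exp ?s - 1) \<le> mean * (- \<epsilon> + \<epsilon>\<^sup>2 / 2)"
      using exp_minus_le_quadratic[of \<epsilon>] assms by (intro mult_left_mono) auto
    moreover have "mean * (- \<epsilon> + \<epsilon>\<^sup>2 / 2) - ?s * ((1 - \<epsilon>) * mean) = - (\<epsilon>\<^sup>2 * mean / 2)"
      by (simp add: power2_eq_square field_simps)
    moreover have "0 \<le> \<epsilon>\<^sup>2 * mean" by simp
    ultimately show ?thesis by (subst exp_le_cancel_iff) linarith
  qed
  finally show ?thesis .
qed

lemma chernoff_two_sided:
  assumes "0 < \<epsilon>" "\<epsilon> \<le> 1"
  shows "measure_pmf.prob (Pi_pmf I d (\<lambda>_. D)) {h. \<epsilon> * mean \<le> \<bar>count h - mean\<bar>}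
           \<le> 2 * exp (- (\<epsilon>\<^sup>2 * mean / 4))"
proof -
  have "{h. \<epsilon> * mean \<le> \<bar>count h - mean\<bar>} =
      {h. (1 + \<epsilon>) * mean \<le> count h} \<union> {h. count h \<le> (1 - \<epsilon>) * mean}"
    by (auto simp: algebra_simps abs_if)
  then have "measure_pmf.prob (Pi_pmf I d (\<lambda>_. D)) {h. \<epsilon> * mean \<le> \<bar>count h - mean\<bar>}
      \<le> measure_pmf.prob (Pi_pmf I d (\<lambda>_. D)) {h. (1 + \<epsilon>) * mean \<le> count h}
        + measure_pmf.prob (Pi_pmf I d (\<lambda>_. D)) {h. count h \<le> (1 - \<epsilon>) * mean}"
    by (simp add: measure_Un_le)
  then show ?thesis
    using chernoff_upper[OF assms] chernoff_lower[OF assms] by linarith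
qed

lemma chernoff_large_deviation:
  "measure_pmf.prob (Pi_pmf I d (\<lambda>_. D)) {h. t \<le> count h} \<le> exp (mean - ln 2 * t)"
  using prob_count_tail_le[where s = "ln 2" and t = t]
  by (simp add: mult_le_cancel_left_pos)

end

section \<open>Multisets\<close>

lemma filter_mset_mset_map:
  "filter_mset P (mset (map f xs)) = mset (map f (filter (\<lambda>x. P (f x)) xs))"
  by (induction xs) auto

text \<open>Pad a list of length at most \<open>c\<close> with \<open>None\<close> to length exactly \<open>c\<close>.\<close>
lemma bounded_size_multisets_subset_image:
  "{S. size S \<le> c \<and> set_mset S \<subseteq> U} \<subseteq>
     (\<lambda>l. mset (List.map_filter id l)) ` {l. set l \<subseteq> insert None (Some ` U) \<and> length l = c}"
proof
  fix S assume S: "S \<in> {S. size S \<le> c \<and> set_mset S \<subseteq> U}"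
  obtain xs where xs: "mset xs = S"
    using ex_mset by blast
  define l where "l = map Some xs @ replicate (c - length xs) None"
  have "List.map_filter id (replicate k None) = []" for k :: nat
    by (induction k) auto
  then have "List.map_filter id (map Some ys @ replicate k None) = ys" for ys :: "'a list" and k :: nat
    by (induction ys) auto
  then have "List.map_filter id l = xs"
    by (simp add: l_def)
  moreover have "set l \<subseteq> insert None (Some ` U) \<and> length l = c"
    using S xs by (auto simp: l_def)
  ultimately show "S \<in> (\<lambda>l. mset (List.map_filter id l)) `
      {l. set l \<subseteq> insert None (Some ` U) \<and> length l = c}"
    using xs by force
qed

lemma
  assumes "finite U"
  shows finite_bounded_size_multisets: "finite {S. size S \<le> c \<and> set_mset S \<subseteq> U}"
    and card_bounded_size_multisets_le: "card {S. size S \<le> c \<and> set_mset S \<subseteq> U} \<le> (card U + 1) ^ c"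
proof -
  let ?Lists = "{l. set l \<subseteq> insert None (Some ` U) \<and> length l = c}"
  have "finite ?Lists" "card ?Lists = (card U + 1) ^ c"
    using assms by (simp_all add: finite_lists_length_eq card_lists_length_eq card_image)
  show "finite {S. size S \<le> c \<and> set_mset S \<subseteq> U}"
    by (rule finite_surj[OF \<open>finite ?Lists\<close> bounded_size_multisets_subset_image])
  show "card {S. size S \<le> c \<and> set_mset S \<subseteq> U} \<le> (card U + 1) ^ c"
    using surj_card_le[OF \<open>finite ?Lists\<close> bounded_size_multisets_subset_image]
      \<open>card ?Lists = _\<close> by simp
qed

section \<open>The subsampling sketch\<close>

text \<open>\<open>Some (j, S)\<close>: level \<open>j\<close> and the multiset \<open>S\<close> of (index, hash) pairs of the sampled
  insertions; \<open>None\<close>: overflow beyond the last level \<open>L\<close>.\<close>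
type_synonym sketch = "(nat \<times> (nat \<times> nat) multiset) option"

function sketch_shrink :: "nat \<Rightarrow> nat \<Rightarrow> nat \<Rightarrow> (nat \<times> nat) multiset \<Rightarrow> sketch" where
  "sketch_shrink cap L j S =
     (if size S \<le> cap then Some (j, S)
      else if j < L then sketch_shrink cap L (Suc j) (filter_mset (\<lambda>z. snd z < 2 ^ (L - Suc j)) S)
      else None)"
  by auto
termination by (relation "Wellfounded.measure (\<lambda>(cap, L, j, S). L - j)") auto

declare sketch_shrink.simps [simp del]

text \<open>The guard \<open>i < n\<close> only matters for invalid streams; it keeps the set of states finite.\<close>
definition sketch_step :: "nat \<Rightarrow> nat \<Rightarrow> nat \<Rightarrow> sketch \<Rightarrow> sop \<Rightarrow> nat \<Rightarrow> sketch" where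
  "sketch_step cap L n s a u =
     (case s of
        None \<Rightarrow> None
      | Some (j, S) \<Rightarrow>
          (case a of
             Ins i \<Rightarrow>
               if i < n then sketch_shrink cap L j (if u < 2 ^ (L - j) then add_mset (i, u) S else S)
               else s
           | Forget i \<Rightarrow> Some (j, filter_mset (\<lambda>z. fst z \<noteq> i) S)))"

abbreviation sketch_run :: "nat \<Rightarrow> nat \<Rightarrow> nat \<Rightarrow> sop list \<Rightarrow> (nat \<Rightarrow> nat) \<Rightarrow> sketch" where
  "sketch_run cap L n \<equiv> run_presampled (sketch_step cap L n) (Some (0, {#}))"

definition sample :: "nat \<Rightarrow> nat \<Rightarrow> sop list \<Rightarrow> (nat \<Rightarrow> nat) \<Rightarrow> (nat \<times> nat) multiset" where
  "sample L j xs h =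
     mset (map (\<lambda>p. (sop_index (xs ! p), h p))
       (filter (\<lambda>p. survives xs p \<and> h p < 2 ^ (L - j)) [0..<length xs]))"

lemma size_sample: "size (sample L j xs h) = card {p. survives xs p \<and> h p < 2 ^ (L - j)}"
proof -
  have "{p. survives xs p \<and> h p < 2 ^ (L - j)} =
      set (filter (\<lambda>p. survives xs p \<and> h p < 2 ^ (L - j)) [0..<length xs])"
    by (auto dest: survives_less_length)
  then show ?thesis
    by (simp add: sample_def distinct_card)
qed

lemma sample_Nil [simp]: "sample L j [] h = {#}"
  by (simp add: sample_def)

lemma sample_snoc_Ins:
  "sample L j (xs @ [Ins i]) h =
     (if h (length xs) < 2 ^ (L - j) then add_mset (i, h (length xs)) (sample L j xs h)
      else sample L j xs h)"
proof -
  let ?P = "\<lambda>ys p. survives ys p \<and> h p < 2 ^ (L - j)"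
  have same_filter: "filter (?P (xs @ [Ins i])) [0..<length xs] = filter (?P xs) [0..<length xs]"
    by (intro filter_cong) (auto simp: survives_snoc)
  have same_map: "map (\<lambda>p. (sop_index ((xs @ [Ins i]) ! p), h p)) (filter (?P xs) [0..<length xs]) =
      map (\<lambda>p. (sop_index (xs ! p), h p)) (filter (?P xs) [0..<length xs])"
    by (intro map_cong) (auto simp: nth_append)
  show ?thesis
    unfolding sample_def length_append_singleton upt_Suc_append[OF le0] filter_append
      same_filter map_append same_map mset_append
    by (simp add: survives_snoc)
qed

lemma sample_snoc_Forget:
  "sample L j (xs @ [Forget i]) h = filter_mset (\<lambda>z. fst z \<noteq> i) (sample L j xs h)"
proof -
  let ?P = "\<lambda>p. survives xs p \<and> h p < 2 ^ (L - j)"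
  have same_filter: "filter (\<lambda>p. survives (xs @ [Forget i]) p \<and> h p < 2 ^ (L - j)) [0..<length xs] =
      filter (\<lambda>p. ?P p \<and> sop_index (xs ! p) \<noteq> i) [0..<length xs]"
    by (intro filter_cong) (auto simp: survives_snoc)
  have same_map: "map (\<lambda>p. (sop_index ((xs @ [Forget i]) ! p), h p))
        (filter (\<lambda>p. ?P p \<and> sop_index (xs ! p) \<noteq> i) [0..<length xs]) =
      map (\<lambda>p. (sop_index (xs ! p), h p)) (filter (\<lambda>p. ?P p \<and> sop_index (xs ! p) \<noteq> i) [0..<length xs])"
    by (intro map_cong) (auto simp: nth_append)
  show ?thesis
    unfolding sample_def length_append_singleton upt_Suc_append[OF le0] filter_append
      same_filter map_append same_map mset_append filter_mset_mset_map filter_filter fst_conv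
    by (simp add: survives_snoc)
qed

lemma filter_sample_next_level:
  "filter_mset (\<lambda>z. snd z < 2 ^ (L - Suc j)) (sample L j xs h) = sample L (Suc j) xs h"
proof -
  have "(2::nat) ^ (L - Suc j) \<le> 2 ^ (L - j)"
    by (intro power_increasing) auto
  then show ?thesis
    unfolding sample_def filter_mset_mset_map filter_filter
    by (intro arg_cong[where f = mset] arg_cong[where f = "map _"] filter_cong)
       (auto intro: order.strict_trans2)
qed

lemma sketch_shrink_sample:
  assumes "S = sample L j xs h" "j \<le> js" "js < L" "size (sample L js xs h) \<le> cap"
  shows "\<exists>j'\<le>js. sketch_shrink cap L j S = Some (j', sample L j' xs h)"
  using assms
proof (induction cap L j S rule: sketch_shrink.induct)
  case (1 cap L j S)
  show ?case
  proof (cases "size S \<le> cap")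
    case True
    then show ?thesis
      using "1.prems" by (auto simp: sketch_shrink.simps)
  next
    case False
    then have "j < js" "j < L"
      using "1.prems" by (auto simp: le_less)
    moreover have "filter_mset (\<lambda>z. snd z < 2 ^ (L - Suc j)) S = sample L (Suc j) xs h"
      using "1.prems"(1) by (simp add: filter_sample_next_level)
    ultimately show ?thesis
      using "1.IH" "1.prems" False by (simp add: sketch_shrink.simps)
  qed
qed

lemma sketch_run_eq_sample:
  assumes "valid_stream n xs" "js < L"
    and "card {p. p < length xs \<and> is_Ins (xs ! p) \<and> h p < 2 ^ (L - js)} \<le> cap"
  shows "\<exists>j\<le>js. sketch_run cap L n xs h = Some (j, sample L j xs h)"
  using assms
proof (induction xs rule: rev_induct)
  case Nil
  then show ?case by simp
next
  case (snoc a xs)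
  let ?Ins = "\<lambda>ys. {p. p < length ys \<and> is_Ins (ys ! p) \<and> h p < 2 ^ (L - js)}"
  have "card (?Ins xs) \<le> card (?Ins (xs @ [a]))"
    by (intro card_mono) (auto simp: nth_append)
  then have "card (?Ins xs) \<le> cap"
    using snoc.prems(3) by linarith
  moreover have valid: "valid_stream n xs" "sop_index a < n"
    using snoc.prems(1) by (auto simp: valid_stream_def split: sop.split_asm)
  ultimately obtain j where j: "j \<le> js" "sketch_run cap L n xs h = Some (j, sample L j xs h)"
    using snoc.IH snoc.prems(2) by blast
  show ?case
  proof (cases a)
    case (Ins i)
    have "size (sample L js (xs @ [a]) h) \<le> card (?Ins (xs @ [a]))"
      unfolding size_sample by (intro card_mono) (auto simp: survives_def)
    then have "size (sample L js (xs @ [a]) h) \<le> cap"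
      using snoc.prems(3) by linarith
    then obtain j' where "j' \<le> js"
        "sketch_shrink cap L j (sample L j (xs @ [a]) h) = Some (j', sample L j' (xs @ [a]) h)"
      using sketch_shrink_sample j(1) snoc.prems(2) by blast
    moreover have "sketch_run cap L n (xs @ [a]) h = sketch_shrink cap L j (sample L j (xs @ [a]) h)"
      using Ins j(2) valid(2) by (simp add: run_presampled_snoc sketch_step_def sample_snoc_Ins)
    ultimately show ?thesis
      by auto
  next
    case (Forget i)
    have "sketch_run cap L n (xs @ [a]) h = Some (j, sample L j (xs @ [a]) h)"
      using Forget j(2) by (simp add: run_presampled_snoc sketch_step_def sample_snoc_Forget)
    then show ?thesis
      using j(1) by auto
  qed
qed

definition sketch_states :: "nat \<Rightarrow> nat \<Rightarrow> nat \<Rightarrow> sketch set" where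
  "sketch_states cap L n =
     insert None (Some ` ({..L} \<times> {S. size S \<le> cap \<and> set_mset S \<subseteq> {..<n} \<times> {..<2 ^ L}}))"

lemma None_in_sketch_states [simp]: "None \<in> sketch_states cap L n"
  by (simp add: sketch_states_def)

lemma Some_in_sketch_states [simp]:
  "Some (j, S) \<in> sketch_states cap L n \<longleftrightarrow>
     j \<le> L \<and> size S \<le> cap \<and> set_mset S \<subseteq> {..<n} \<times> {..<2 ^ L}"
  by (auto simp: sketch_states_def)

lemma sketch_shrink_in_states:
  "j \<le> L \<Longrightarrow> set_mset S \<subseteq> {..<n} \<times> {..<2 ^ L} \<Longrightarrow> sketch_shrink cap L j S \<in> sketch_states cap L n"
proof (induction cap L j S rule: sketch_shrink.induct)
  case (1 cap L j S)
  have "set_mset (filter_mset P S) \<subseteq> {..<n} \<times> {..<2 ^ L}" for P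
    using "1.prems"(2) by auto
  then show ?case
    using "1.IH" "1.prems" by (subst sketch_shrink.simps) auto
qed

lemma sketch_step_in_states:
  assumes "s \<in> sketch_states cap L n"
  shows "sketch_step cap L n s a u \<in> sketch_states cap L n"
proof (cases s)
  case (Some js)
  then obtain j S where s: "s = Some (j, S)" "j \<le> L" "size S \<le> cap"
    and S: "set_mset S \<subseteq> {..<n} \<times> {..<2 ^ L}"
    using assms by (cases js) auto
  have "(2::nat) ^ (L - j) \<le> 2 ^ L"
    by (intro power_increasing) auto
  then have "set_mset (if u < 2 ^ (L - j) then add_mset (i, u) S else S) \<subseteq> {..<n} \<times> {..<2 ^ L}"
    if "i < n" for i
    using S that by (auto intro: order.strict_trans2)
  moreover have "size (filter_mset P S) \<le> cap" for P
    using s(3) size_filter_mset_lesseq le_trans by blast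
  ultimately show ?thesis
    using assms s S sketch_shrink_in_states
    by (cases a) (auto simp: sketch_step_def)
qed (simp add: sketch_step_def)

lemma finite_sketch_states: "finite (sketch_states cap L n)"
  unfolding sketch_states_def
  by (intro finite.insertI finite_imageI finite_cartesian_product finite_bounded_size_multisets) auto

lemma card_sketch_states: "card (sketch_states cap L n) \<le> 1 + (L + 1) * (n * 2 ^ L + 1) ^ cap"
proof -
  let ?M = "{S. size S \<le> cap \<and> set_mset S \<subseteq> {..<n} \<times> {..<(2::nat) ^ L}}"
  have "card (sketch_states cap L n) \<le> 1 + card (Some ` ({..L} \<times> ?M))"
    unfolding sketch_states_def by (simp add: card_insert_if finite_bounded_size_multisets)
  also have "\<dots> = 1 + (L + 1) * card ?M"
    by (simp add: card_image card_cartesian_product)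
  also have "\<dots> \<le> 1 + (L + 1) * (n * 2 ^ L + 1) ^ cap"
    using card_bounded_size_multisets_le[of "{..<n} \<times> {..<(2::nat) ^ L}" cap]
    by (intro add_left_mono mult_left_mono) (simp_all add: card_cartesian_product)
  finally show ?thesis .
qed

definition sketch_transition :: "nat \<Rightarrow> nat \<Rightarrow> nat \<Rightarrow> sketch \<Rightarrow> sop \<Rightarrow> sketch pmf" where
  "sketch_transition cap L n s a = map_pmf (sketch_step cap L n s a) (pmf_of_set {..<2 ^ L})"

lemma finite_state_alg_sketch:
  "finite_state_alg (sketch_states cap L n) (Some (0, {#})) (sketch_transition cap L n)"
proof
  show "set_pmf (sketch_transition cap L n s a) \<subseteq> sketch_states cap L n"
    if "s \<in> sketch_states cap L n" for s a
    using sketch_step_in_states[OF that]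
    by (auto simp: sketch_transition_def lessThan_empty_iff)
qed (simp_all add: finite_sketch_states)

definition sketch_estimate :: "sketch \<Rightarrow> real" where
  "sketch_estimate s = (case s of None \<Rightarrow> 0 | Some (j, S) \<Rightarrow> real (size S) * 2 ^ j)"

definition sketch_alg :: "nat \<Rightarrow> nat \<Rightarrow> nat \<Rightarrow> stream_alg" where
  "sketch_alg cap L n =
     finite_state_alg.as_stream_alg (sketch_states cap L n) (Some (0, {#})) (sketch_transition cap L n)
       sketch_estimate"

lemma uses_bits_sketch_alg:
  "card (sketch_states cap L n) \<le> 2 ^ b \<Longrightarrow> uses_bits (sketch_alg cap L n) b"
  unfolding sketch_alg_def by (rule finite_state_alg.uses_bits_as_stream_alg[OF finite_state_alg_sketch])

abbreviation hashes :: "nat \<Rightarrow> nat \<Rightarrow> (nat \<Rightarrow> nat) pmf" where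
  "hashes L m \<equiv> Pi_pmf {..<m} 0 (\<lambda>_. pmf_of_set {..<2 ^ L})"

lemma hashes_less: "h \<in> set_pmf (hashes L m) \<Longrightarrow> p < m \<Longrightarrow> h p < 2 ^ L"
  by (simp add: set_Pi_pmf PiE_dflt_def lessThan_empty_iff)

lemma out_dist_sketch_alg:
  "out_dist (sketch_alg cap L n) xs =
     map_pmf (\<lambda>h. sketch_estimate (sketch_run cap L n xs h)) (hashes L (length xs))"
  unfolding sketch_alg_def finite_state_alg.out_dist_as_stream_alg[OF finite_state_alg_sketch]
    sketch_transition_def run_states_eq_presampled[where d = 0] pmf.map_comp
  by (simp add: comp_def)

section \<open>Error probability\<close>

lemma prob_map_pmf_ge:
  assumes "\<And>x. x \<in> set_pmf p \<Longrightarrow> x \<notin> B \<Longrightarrow> f x \<in> A"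
  shows "1 - measure_pmf.prob p B \<le> measure_pmf.prob (map_pmf f p) A"
proof -
  have "1 - measure_pmf.prob p B = measure_pmf.prob p (- B)"
    using measure_pmf.prob_compl[of B p] by (simp add: Compl_eq_Diff_UNIV)
  also have "\<dots> = measure_pmf.prob p (- B \<inter> set_pmf p)"
    by (simp add: measure_Int_set_pmf)
  also have "\<dots> \<le> measure_pmf.prob p (f -` A)"
    using assms by (intro measure_pmf.finite_measure_mono) auto
  finally show ?thesis
    by simp
qed

lemma prob_uniform_below_level:
  assumes "j \<le> L"
  shows "measure_pmf.prob (pmf_of_set {..<(2::nat) ^ L}) {..<2 ^ (L - j)} = 1 / 2 ^ j"
proof -
  have "(2::nat) ^ (L - j) \<le> 2 ^ L"
    by (intro power_increasing) auto
  then have "measure_pmf.prob (pmf_of_set {..<(2::nat) ^ L}) {..<2 ^ (L - j)} = 2 ^ (L - j) / 2 ^ L"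
    by (simp add: measure_pmf_of_set lessThan_empty_iff Int_absorb1)
  also have "\<dots> = 1 / 2 ^ j"
    using assms by (simp add: power_diff)
  finally show ?thesis .
qed

lemma prob_count_exceeds_le:
  assumes "P \<subseteq> {..<m}" "js \<le> L" "0 < \<delta>"
    and cap: "2 * (real (card P) / 2 ^ js + ln (2 / \<delta>)) \<le> real cap"
  shows "measure_pmf.prob (hashes L m) {h. cap < card {p \<in> P. h p < 2 ^ (L - js)}} \<le> \<delta> / 2"
proof -
  let ?\<mu> = "real (card P) / 2 ^ js"
  have "measure_pmf.prob (hashes L m) {h. cap < card {p \<in> P. h p < 2 ^ (L - js)}}
      \<le> measure_pmf.prob (hashes L m) {h. real cap \<le> real (card {p \<in> P. h p \<in> {..<2 ^ (L - js)}})}"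
    by (intro measure_pmf.finite_measure_mono) auto
  also have "\<dots> \<le> exp (?\<mu> - ln 2 * real cap)"
    using chernoff_large_deviation[OF finite_lessThan assms(1), where t = "real cap" and d = 0
        and D = "pmf_of_set {..<(2::nat) ^ L}" and E = "{..<(2::nat) ^ (L - js)}"]
    by (simp add: prob_uniform_below_level[OF assms(2)])
  also have "\<dots> \<le> exp (- ln (2 / \<delta>))"
    using cap ln2_ge_two_thirds mult_right_mono[OF ln2_ge_two_thirds, of "real cap"] by simp
  also have "\<dots> = \<delta> / 2"
    using assms(3) by (simp add: exp_minus)
  finally show ?thesis .
qed

lemma exp_minus_le_power_Suc:
  fixes c x :: real
  assumes "0 \<le> c" "c * 2 ^ i \<le> x"
  shows "exp (- x) \<le> exp (- c) ^ Suc i"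
proof -
  have "real (Suc i) \<le> 2 ^ i"
    by (induction i) auto
  then have "c * real (Suc i) \<le> x"
    using assms by (meson mult_left_mono order_trans)
  then have "exp (- x) \<le> exp (real (Suc i) * (- c))"
    by (simp add: mult.commute)
  also have "\<dots> = exp (- c) ^ Suc i"
    by (rule exp_of_nat_mult)
  finally show ?thesis .
qed

lemma prob_level_deviates_le:
  fixes \<epsilon> \<delta> :: real
  assumes "P \<subseteq> {..<m}" "0 < \<epsilon>" "\<epsilon> \<le> 1" "0 < \<delta>" "\<delta> < 8" "j \<le> js" "js \<le> L"
    and large: "4 * ln (8 / \<delta>) / \<epsilon>\<^sup>2 * 2 ^ js \<le> real (card P)"
  shows "measure_pmf.prob (hashes L m)
           {h. \<epsilon> * (card P / 2 ^ j) \<le> \<bar>real (card {p \<in> P. h p < 2 ^ (L - j)}) - card P / 2 ^ j\<bar>}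
         \<le> 2 * (\<delta> / 8) ^ Suc (js - j)"
proof -
  let ?\<mu> = "real (card P) / 2 ^ j"
  have "measure_pmf.prob (hashes L m)
          {h. \<epsilon> * ?\<mu> \<le> \<bar>real (card {p \<in> P. h p < 2 ^ (L - j)}) - ?\<mu>\<bar>}
        \<le> 2 * exp (- (\<epsilon>\<^sup>2 * ?\<mu> / 4))"
    using chernoff_two_sided[OF finite_lessThan assms(1) assms(2,3), where d = 0
        and D = "pmf_of_set {..<(2::nat) ^ L}" and E = "{..<(2::nat) ^ (L - j)}"]
    using assms(6,7) by (simp add: prob_uniform_below_level)
  also have "exp (- (\<epsilon>\<^sup>2 * ?\<mu> / 4)) \<le> exp (- ln (8 / \<delta>)) ^ Suc (js - j)"
  proof (rule exp_minus_le_power_Suc)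
    show "0 \<le> ln (8 / \<delta>)"
      using assms(4,5) by simp
    have "ln (8 / \<delta>) * 2 ^ (js - j) = \<epsilon>\<^sup>2 / 4 * (4 * ln (8 / \<delta>) / \<epsilon>\<^sup>2 * 2 ^ js / 2 ^ j)"
      using assms(2,6) by (simp add: power_diff field_simps)
    also have "\<dots> \<le> \<epsilon>\<^sup>2 / 4 * ?\<mu>"
      by (intro mult_left_mono divide_right_mono large) auto
    finally show "ln (8 / \<delta>) * 2 ^ (js - j) \<le> \<epsilon>\<^sup>2 * ?\<mu> / 4"
      by simp
  qed
  also have "exp (- ln (8 / \<delta>)) = \<delta> / 8"
    using assms(4) by (simp add: exp_minus)
  finally show ?thesis
    by simp
qed

lemma exists_sampling_level:
  fixes T G :: real
  assumes "1 \<le> L" "1 \<le> T" "G \<le> 2 ^ (L - 1)"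
  shows "\<exists>js<L. G \<le> 2 * T * 2 ^ js \<and> (0 < js \<longrightarrow> T * 2 ^ js \<le> G)"
proof -
  define js where "js = (LEAST j. G \<le> 2 * T * 2 ^ j \<or> j = L - 1)"
  have js: "G \<le> 2 * T * 2 ^ js \<or> js = L - 1"
    unfolding js_def by (rule LeastI[of _ "L - 1"]) simp
  have "js \<le> L - 1"
    unfolding js_def by (rule Least_le) simp
  moreover have "G \<le> 2 * T * 2 ^ js"
  proof (cases "js = L - 1")
    case True
    have "G \<le> 1 * 2 ^ (L - 1)" using assms(3) by simp
    also have "\<dots> \<le> 2 * T * 2 ^ (L - 1)" using assms(2) by (intro mult_right_mono) auto
    finally show ?thesis using True by simp
  qed (use js in auto)
  moreover have "T * 2 ^ js \<le> G" if "0 < js"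
  proof -
    have "\<not> (G \<le> 2 * T * 2 ^ (js - 1) \<or> js - 1 = L - 1)"
      unfolding js_def by (rule not_less_Least) (use that js_def in simp)
    moreover have "2 * T * 2 ^ (js - 1) = T * 2 ^ js"
      using that by (simp add: power_eq_if)
    ultimately show ?thesis by (simp only: de_Morgan_disj not_le) linarith
  qed
  ultimately show ?thesis
    using assms(1) by (intro exI[of _ js]) auto
qed

lemma sum_power_Suc_reversed_le:
  fixes r :: real
  assumes "0 \<le> r" "r < 1"
  shows "(\<Sum>j\<in>{1..n}. r ^ Suc (n - j)) \<le> r / (1 - r)"
proof -
  have "(\<Sum>j\<in>{1..n}. r ^ Suc (n - j)) = r * (\<Sum>i<n. r ^ i)"
    by (subst sum.reindex_bij_witness[where i = "\<lambda>i. n - i" and j = "\<lambda>j. n - j" and T = "{..<n}"])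
       (auto simp: sum_distrib_left)
  also have "\<dots> = r * ((1 - r ^ n) / (1 - r))"
    using assms by (simp add: sum_gp_strict)
  also have "\<dots> \<le> r * (1 / (1 - r))"
    using assms by (intro mult_left_mono divide_right_mono) auto
  finally show ?thesis by simp
qed

lemma prob_some_level_deviates_le:
  fixes \<epsilon> \<delta> :: real
  assumes "P \<subseteq> {..<m}" "0 < \<epsilon>" "\<epsilon> \<le> 1" "0 < \<delta>" "\<delta> < 1" "js \<le> L"
    and large: "0 < js \<Longrightarrow> 4 * ln (8 / \<delta>) / \<epsilon>\<^sup>2 * 2 ^ js \<le> real (card P)"
  shows "measure_pmf.prob (hashes L m) (\<Union>j\<in>{1..js}.
           {h. \<epsilon> * (card P / 2 ^ j) \<le> \<bar>real (card {p \<in> P. h p < 2 ^ (L - j)}) - card P / 2 ^ j\<bar>})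
         \<le> \<delta> / 2"
proof -
  have "measure_pmf.prob (hashes L m) (\<Union>j\<in>{1..js}.
           {h. \<epsilon> * (card P / 2 ^ j) \<le> \<bar>real (card {p \<in> P. h p < 2 ^ (L - j)}) - card P / 2 ^ j\<bar>})
      \<le> (\<Sum>j\<in>{1..js}. measure_pmf.prob (hashes L m)
           {h. \<epsilon> * (card P / 2 ^ j) \<le> \<bar>real (card {p \<in> P. h p < 2 ^ (L - j)}) - card P / 2 ^ j\<bar>})"
    by (rule measure_pmf.finite_measure_subadditive_finite) auto
  also have "\<dots> \<le> (\<Sum>j\<in>{1..js}. 2 * (\<delta> / 8) ^ Suc (js - j))"
    using assms(1-6) large by (intro sum_mono prob_level_deviates_le) auto
  also have "\<dots> = 2 * (\<Sum>j\<in>{1..js}. (\<delta> / 8) ^ Suc (js - j))"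
    by (rule sum_distrib_left[symmetric])
  also have "\<dots> \<le> 2 * ((\<delta> / 8) / (1 - \<delta> / 8))"
    using assms(4,5) by (intro mult_left_mono sum_power_Suc_reversed_le) auto
  also have "\<dots> \<le> \<delta> / 2"
    using assms(4,5) by (simp add: field_simps)
  finally show ?thesis .
qed

lemma sketch_estimate_accurate:
  fixes \<epsilon> :: real and xs :: "sop list"
  defines "G \<equiv> real (card {p. survives xs p})"
  assumes "valid_stream n xs" "js < L" "0 \<le> \<epsilon>" "\<forall>p<length xs. h p < 2 ^ L"
    and "card {p. p < length xs \<and> is_Ins (xs ! p) \<and> h p < 2 ^ (L - js)} \<le> cap"
    and close: "\<forall>j\<in>{1..js}.
      \<bar>real (card {p. survives xs p \<and> h p < 2 ^ (L - j)}) - G / 2 ^ j\<bar> < \<epsilon> * (G / 2 ^ j)"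
  shows "\<bar>sketch_estimate (sketch_run cap L n xs h) - G\<bar> \<le> \<epsilon> * G"
proof -
  obtain j where "j \<le> js" and run: "sketch_run cap L n xs h = Some (j, sample L j xs h)"
    using sketch_run_eq_sample assms(2,3,6) by blast
  show ?thesis
  proof (cases "j = 0")
    case True
    have "{p. survives xs p \<and> h p < 2 ^ L} = {p. survives xs p}"
      using assms(5) by (auto dest: survives_less_length)
    then show ?thesis
      using run True assms(4) by (simp add: sketch_estimate_def size_sample G_def)
  next
    case False
    then have "\<bar>real (size (sample L j xs h)) - G / 2 ^ j\<bar> < \<epsilon> * (G / 2 ^ j)"
      using close \<open>j \<le> js\<close> by (simp add: size_sample)
    then have "\<bar>real (size (sample L j xs h)) * 2 ^ j - G\<bar> < \<epsilon> * G"
      by (simp add: field_simps abs_less_iff)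
    then show ?thesis
      using run by (simp add: sketch_estimate_def)
  qed
qed

lemma ln_8_ge_2: "2 \<le> ln (8::real)"
proof -
  have "ln (8::real) = 3 * ln 2"
    using ln_realpow[of 2 3] by simp
  then show ?thesis
    using ln2_ge_two_thirds by simp
qed

lemma exists_level_for_cap:
  fixes \<epsilon> \<alpha> \<delta> M G :: real
  assumes "0 < \<epsilon>" "\<epsilon> \<le> 1" "\<alpha> < 1" "0 < \<delta>" "\<delta> < 1" "1 \<le> L"
    and "(1 - \<alpha>) * M \<le> G" "G \<le> 2 ^ (L - 1)"
    and cap: "2 * (8 * ln (8 / \<delta>) / (\<epsilon>\<^sup>2 * (1 - \<alpha>)) + ln (2 / \<delta>)) \<le> c"
  shows "\<exists>js<L. 2 * (M / 2 ^ js + ln (2 / \<delta>)) \<le> c \<and>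
           (0 < js \<longrightarrow> 4 * ln (8 / \<delta>) / \<epsilon>\<^sup>2 * 2 ^ js \<le> G)"
proof -
  define T where "T = 4 * ln (8 / \<delta>) / \<epsilon>\<^sup>2"
  have "ln 8 \<le> ln (8 / \<delta>)"
    using assms(4,5) by (subst ln_le_cancel_iff) (auto simp: field_simps)
  then have "2 \<le> ln (8 / \<delta>)"
    using ln_8_ge_2 by linarith
  moreover have "\<epsilon>\<^sup>2 \<le> 1"
    using assms(1,2) by (simp add: power_le_one)
  ultimately have "1 \<le> T"
    unfolding T_def using assms(1) by (simp add: le_divide_eq)
  then obtain js where js: "js < L" "G \<le> 2 * T * 2 ^ js" "0 < js \<longrightarrow> T * 2 ^ js \<le> G"
    using exists_sampling_level[OF assms(6) _ assms(8)] by blast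
  have "M \<le> G / (1 - \<alpha>)"
    using assms(3,7) by (simp add: field_simps)
  then have "M / 2 ^ js \<le> G / (1 - \<alpha>) / 2 ^ js"
    by (intro divide_right_mono) auto
  also have "\<dots> = G / 2 ^ js / (1 - \<alpha>)"
    by simp
  also have "\<dots> \<le> 2 * T / (1 - \<alpha>)"
    using js(2) assms(3) by (intro divide_right_mono) (auto simp: field_simps)
  also have "\<dots> = 8 * ln (8 / \<delta>) / (\<epsilon>\<^sup>2 * (1 - \<alpha>))"
    by (simp add: T_def)
  finally show ?thesis
    using js cap by (intro exI[of _ js]) (auto simp: T_def)
qed

lemma prob_sketch_fails_le:
  fixes \<epsilon> \<delta> :: real
  assumes "Inserts \<subseteq> {..<m}" "Survivors \<subseteq> {..<m}" "0 < \<epsilon>" "\<epsilon> \<le> 1" "0 < \<delta>" "\<delta> < 1" "js \<le> L"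
    and "2 * (real (card Inserts) / 2 ^ js + ln (2 / \<delta>)) \<le> real cap"
    and "0 < js \<Longrightarrow> 4 * ln (8 / \<delta>) / \<epsilon>\<^sup>2 * 2 ^ js \<le> real (card Survivors)"
  shows "measure_pmf.prob (hashes L m) ({h. cap < card {p \<in> Inserts. h p < 2 ^ (L - js)}} \<union>
           (\<Union>j\<in>{1..js}. {h. \<epsilon> * (card Survivors / 2 ^ j)
              \<le> \<bar>real (card {p \<in> Survivors. h p < 2 ^ (L - j)}) - card Survivors / 2 ^ j\<bar>}))
         \<le> \<delta>"
proof -
  let ?Overflow = "{h. cap < card {p \<in> Inserts. h p < 2 ^ (L - js)}}"
  let ?Deviates = "\<Union>j\<in>{1..js}. {h. \<epsilon> * (card Survivors / 2 ^ j)
      \<le> \<bar>real (card {p \<in> Survivors. h p < 2 ^ (L - j)}) - card Survivors / 2 ^ j\<bar>}"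
  have "measure_pmf.prob (hashes L m) (?Overflow \<union> ?Deviates)
      \<le> measure_pmf.prob (hashes L m) ?Overflow + measure_pmf.prob (hashes L m) ?Deviates"
    by (rule measure_Un_le) auto
  then show ?thesis
    using prob_count_exceeds_le[OF assms(1,7,5,8)] prob_some_level_deviates_le[OF assms(2-7,9)]
    by linarith
qed

lemma sketch_alg_correct:
  fixes \<epsilon> \<alpha> \<delta> :: real
  assumes "0 < \<epsilon>" "\<epsilon> \<le> 1" "\<alpha> < 1" "0 < \<delta>" "\<delta> < 1" "1 \<le> L"
    and cap: "2 * (8 * ln (8 / \<delta>) / (\<epsilon>\<^sup>2 * (1 - \<alpha>)) + ln (2 / \<delta>)) \<le> real cap"
    and xs: "valid_stream n xs" "length xs \<le> 2 ^ (L - 1)" "rfds \<alpha> n xs"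
  shows "1 - \<delta> \<le> measure_pmf.prob (out_dist (sketch_alg cap L n) xs)
           {x. \<bar>x - F1 n (freq_g xs)\<bar> \<le> \<epsilon> * F1 n (freq_g xs)}"
proof -
  define m where "m = length xs"
  define Survivors where "Survivors = {p. survives xs p}"
  define Inserts where "Inserts = {p. p < m \<and> is_Ins (xs ! p)}"
  define G where "G = real (card Survivors)"
  have Survivors_sub: "Survivors \<subseteq> {..<m}" and Inserts_sub: "Inserts \<subseteq> {..<m}"
    by (auto simp: Survivors_def Inserts_def m_def dest: survives_less_length)
  have F1_g: "F1 n (freq_g xs) = G"
    using F1_freq_g[OF xs(1)] by (simp add: G_def Survivors_def)
  have "(1 - \<alpha>) * card Inserts \<le> G"
    using xs(3) F1_g F1_freq_f[OF xs(1)] by (simp add: rfds_def Inserts_def m_def)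
  moreover have "G \<le> 2 ^ (L - 1)"
    using card_mono[OF _ Survivors_sub] xs(2) unfolding G_def m_def
    by (metis finite_lessThan card_lessThan of_nat_le_iff of_nat_numeral of_nat_power order_trans)
  ultimately obtain js where js: "js < L" "2 * (card Inserts / 2 ^ js + ln (2 / \<delta>)) \<le> cap"
      "0 < js \<longrightarrow> 4 * ln (8 / \<delta>) / \<epsilon>\<^sup>2 * 2 ^ js \<le> G"
    using exists_level_for_cap[OF assms(1-6) _ _ cap] by blast
  define Bad :: "(nat \<Rightarrow> nat) set" where
    "Bad = {h. cap < card {p \<in> Inserts. h p < 2 ^ (L - js)}} \<union> (\<Union>j\<in>{1..js}.
       {h. \<epsilon> * (G / 2 ^ j) \<le> \<bar>real (card {p \<in> Survivors. h p < 2 ^ (L - j)}) - G / 2 ^ j\<bar>})"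
  have "measure_pmf.prob (hashes L m) Bad \<le> \<delta>"
    unfolding Bad_def G_def
    using js
    by (intro prob_sketch_fails_le[OF Inserts_sub Survivors_sub assms(1,2,4,5)]) (auto simp: G_def)
  moreover have "sketch_estimate (sketch_run cap L n xs h) \<in> {x. \<bar>x - G\<bar> \<le> \<epsilon> * G}"
    if h: "h \<in> set_pmf (hashes L m)" "h \<notin> Bad" for h
  proof -
    have "card {p. p < length xs \<and> is_Ins (xs ! p) \<and> h p < 2 ^ (L - js)} \<le> cap"
      using h(2) unfolding Bad_def Inserts_def m_def by simp
    moreover have "\<forall>j\<in>{1..js}.
        \<bar>real (card {p. survives xs p \<and> h p < 2 ^ (L - j)}) - G / 2 ^ j\<bar> < \<epsilon> * (G / 2 ^ j)"
      using h(2) unfolding Bad_def Survivors_def by (auto simp: not_le)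
    moreover have "\<forall>p<length xs. h p < 2 ^ L"
      using h(1) hashes_less m_def by blast
    ultimately show ?thesis
      using sketch_estimate_accurate[OF xs(1) js(1), of \<epsilon> h cap] assms(1)
      by (simp add: G_def Survivors_def)
  qed
  then have "1 - measure_pmf.prob (hashes L m) Bad \<le> measure_pmf.prob
      (map_pmf (\<lambda>h. sketch_estimate (sketch_run cap L n xs h)) (hashes L m)) {x. \<bar>x - G\<bar> \<le> \<epsilon> * G}"
    by (rule prob_map_pmf_ge)
  ultimately show ?thesis
    by (simp add: out_dist_sketch_alg F1_g m_def)
qed

section \<open>Space\<close>

lemma card_sketch_states_le_power:
  assumes "n \<le> 2 ^ nb"
  shows "card (sketch_states cap L n) \<le> 2 ^ (L + 1 + cap * (nb + L + 1))"
proof -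
  have "n * 2 ^ L \<le> 2 ^ (nb + L)"
    using assms by (simp add: power_add)
  moreover have "1 \<le> (2::nat) ^ (nb + L)"
    by simp
  ultimately have "n * 2 ^ L + 1 \<le> 2 * 2 ^ (nb + L)"
    by linarith
  then have "n * 2 ^ L + 1 \<le> 2 ^ (nb + L + 1)"
    by simp
  then have "(n * 2 ^ L + 1) ^ cap \<le> 2 ^ (cap * (nb + L + 1))"
    unfolding mult.commute[of cap] power_mult by (rule power_mono) simp
  moreover have "L + 1 \<le> 2 ^ L"
    using less_exp[of L] by (simp add: Suc_le_eq)
  ultimately have "(L + 1) * (n * 2 ^ L + 1) ^ cap \<le> 2 ^ L * 2 ^ (cap * (nb + L + 1))"
    by (intro mult_le_mono)
  then have "card (sketch_states cap L n) \<le> 1 + 2 ^ L * 2 ^ (cap * (nb + L + 1))"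
    using card_sketch_states[of cap L n] by linarith
  also have "\<dots> \<le> 2 * (2 ^ L * 2 ^ (cap * (nb + L + 1)))"
    by simp
  finally show ?thesis
    by (simp add: power_add)
qed

definition sketch_cap :: "real \<Rightarrow> real \<Rightarrow> real \<Rightarrow> nat" where
  "sketch_cap \<epsilon> \<alpha> \<delta> = nat \<lceil>2 * (8 * ln (8 / \<delta>) / (\<epsilon>\<^sup>2 * (1 - \<alpha>)) + ln (2 / \<delta>))\<rceil>"

lemma sketch_cap_le:
  fixes \<epsilon> \<alpha> \<delta> :: real
  assumes "0 < \<epsilon>" "\<epsilon> \<le> 1" "0 \<le> \<alpha>" "\<alpha> < 1" "0 < \<delta>" "\<delta> < 1"
  defines "\<Lambda> \<equiv> max 1 (log 2 (1 / \<delta>))"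
  shows "real (sketch_cap \<epsilon> \<alpha> \<delta>) \<le> 69 * \<Lambda> / (\<epsilon>\<^sup>2 * (1 - \<alpha>))"
proof -
  define D where "D = \<epsilon>\<^sup>2 * (1 - \<alpha>)"
  have D: "0 < D" "D \<le> 1"
    using assms(1-4) by (auto simp: D_def power_le_one intro: mult_le_one)
  have "ln (1 / \<delta>) = ln 2 * log 2 (1 / \<delta>)"
    by (simp add: log_def)
  also have "\<dots> \<le> \<Lambda>"
    using assms(5,6) ln_2_less_1
    by (auto simp: \<Lambda>_def intro!: mult_le_one order.trans[OF _ max.cobounded2])
  finally have ln_inv: "ln (1 / \<delta>) \<le> \<Lambda>" .
  have "0 \<le> ln (1 / \<delta>)" "1 \<le> \<Lambda>"
    using assms(5,6) by (simp_all add: \<Lambda>_def)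
  moreover have "ln (8::real) \<le> 3"
    using ln_realpow[of 2 3] ln_2_less_1 by simp
  moreover have "ln (8 / \<delta>) = ln 8 + ln (1 / \<delta>)" "ln (2 / \<delta>) = ln 2 + ln (1 / \<delta>)"
    using assms(5) by (simp_all add: ln_div)
  ultimately have "ln (8 / \<delta>) \<le> 4 * \<Lambda>" "0 \<le> ln (8 / \<delta>)" "ln (2 / \<delta>) \<le> 2 * \<Lambda>" "0 \<le> ln (2 / \<delta>)"
    using ln_inv ln_2_less_1 by auto
  then have "ln (8 / \<delta>) / D \<le> 4 * (\<Lambda> / D)" "0 \<le> ln (8 / \<delta>) / D" "\<Lambda> \<le> \<Lambda> / D"
    using D \<open>1 \<le> \<Lambda>\<close> by (auto simp: divide_right_mono le_divide_eq)
  then have "16 * (ln (8 / \<delta>) / D) + 2 * ln (2 / \<delta>) + 1 \<le> 69 * (\<Lambda> / D)"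
    using \<open>ln (2 / \<delta>) \<le> 2 * \<Lambda>\<close> \<open>1 \<le> \<Lambda>\<close> by linarith
  moreover have "2 * (8 * ln (8 / \<delta>) / D + ln (2 / \<delta>)) + 1 = 16 * (ln (8 / \<delta>) / D) + 2 * ln (2 / \<delta>) + 1"
    by (simp add: algebra_simps)
  ultimately have "2 * (8 * ln (8 / \<delta>) / D + ln (2 / \<delta>)) + 1 \<le> 69 * \<Lambda> / D"
    by simp
  moreover have "0 \<le> 2 * (8 * ln (8 / \<delta>) / D + ln (2 / \<delta>))"
    using \<open>0 \<le> ln (8 / \<delta>) / D\<close> \<open>0 \<le> ln (2 / \<delta>)\<close> by simp
  ultimately show ?thesis
    unfolding sketch_cap_def D_def by linarith
qed

lemma sketch_space_le:
  fixes \<epsilon> \<alpha> \<delta> :: real and n nb L cap :: nat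
  assumes "2 \<le> n" "0 < \<epsilon>" "\<epsilon> \<le> 1" "0 \<le> \<alpha>" "\<alpha> < 1" "0 < \<delta>" "\<delta> < 1"
    and nb: "nb = nat \<lceil>log 2 n\<rceil>" and L: "L = k * nb + 1"
    and cap: "cap = sketch_cap \<epsilon> \<alpha> \<delta>"
  shows "real (L + 1 + cap * (nb + L + 1))
           \<le> 200 * (real k + 2) * (1 / (1 - \<alpha>)) * (1 / \<epsilon>^2) * log 2 n * max 1 (log 2 (1 / \<delta>))"
proof -
  define lg where "lg = log 2 n"
  define Q where "Q = max 1 (log 2 (1 / \<delta>)) / (\<epsilon>\<^sup>2 * (1 - \<alpha>))"
  have lg: "1 \<le> lg"
    using assms(1) by (simp add: lg_def le_log_iff)
  then have nb_le: "real nb \<le> 2 * lg"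
    unfolding nb lg_def by linarith
  have "\<epsilon>\<^sup>2 * (1 - \<alpha>) \<le> 1"
    using assms(2-5) by (intro mult_le_one) (auto simp: power_le_one)
  then have Q: "1 \<le> Q"
    using assms(2,5) by (simp add: Q_def le_divide_eq)
  have cap_le: "real cap \<le> 69 * Q"
    using sketch_cap_le[OF assms(2-7)] by (simp add: cap Q_def)
  have "real (nb + L + 1) = (real k + 1) * real nb + 2"
    by (simp add: L algebra_simps)
  also have "\<dots> \<le> (2 * real k + 4) * lg"
    using nb_le lg mult_left_mono[OF nb_le, of "real k + 1"] by (simp add: algebra_simps)
  finally have width: "real (nb + L + 1) \<le> (2 * real k + 4) * lg" .
  have "real (L + 1) \<le> (2 * real k + 2) * lg"
    using nb_le lg mult_left_mono[OF nb_le, of "real k"] by (simp add: L algebra_simps)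
  also have "\<dots> \<le> (2 * real k + 2) * lg * Q"
    using Q lg by simp
  finally have "real (L + 1) + real cap * real (nb + L + 1)
      \<le> (2 * real k + 2) * lg * Q + 69 * Q * ((2 * real k + 4) * lg)"
    using Q by (intro add_mono mult_mono cap_le width) auto
  then have "real (L + 1 + cap * (nb + L + 1))
      \<le> (2 * real k + 2) * lg * Q + 69 * Q * ((2 * real k + 4) * lg)"
    by (simp only: of_nat_add of_nat_mult)
  also have "\<dots> \<le> 200 * (real k + 2) * Q * lg"
    using Q lg by (simp add: algebra_simps)
  finally show ?thesis
    by (simp add: Q_def lg_def field_simps)
qed

lemma F1_sketch_exists:
  fixes \<epsilon> \<alpha> \<delta> :: real and n :: nat
  assumes "2 \<le> n" "0 < \<epsilon>" "\<epsilon> < 1/2" "0 < \<alpha>" "\<alpha> < 1" "0 < \<delta>" "\<delta> < 1"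
  shows "\<exists>A b. uses_bits A b \<and>
           real b \<le> 200 * (real k + 2) * (1 / (1 - \<alpha>)) * (1 / \<epsilon>^2) * log 2 n * max 1 (log 2 (1 / \<delta>)) \<and>
           (\<forall>xs. valid_stream n xs \<and> length xs \<le> n ^ k \<and> rfds \<alpha> n xs \<longrightarrow>
              measure_pmf.prob (out_dist A xs)
                {x. \<bar>x - F1 n (freq_g xs)\<bar> \<le> \<epsilon> * F1 n (freq_g xs)} \<ge> 1 - \<delta>)"
proof -
  define nb where "nb = nat \<lceil>log 2 n\<rceil>"
  define L where "L = k * nb + 1"
  define cap where "cap = sketch_cap \<epsilon> \<alpha> \<delta>"
  have "real n = 2 powr log 2 n"
    using assms(1) by simp
  also have "\<dots> \<le> 2 powr nb"
    by (intro powr_mono) (auto simp: nb_def real_nat_ceiling_ge)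
  also have "\<dots> = 2 ^ nb"
    by (simp add: powr_realpow)
  finally have n_le: "n \<le> 2 ^ nb"
    by (simp add: nb_def)
  show ?thesis
  proof (intro exI conjI allI impI)
    show "uses_bits (sketch_alg cap L n) (L + 1 + cap * (nb + L + 1))"
      by (intro uses_bits_sketch_alg card_sketch_states_le_power n_le)
    show "real (L + 1 + cap * (nb + L + 1))
        \<le> 200 * (real k + 2) * (1 / (1 - \<alpha>)) * (1 / \<epsilon>^2) * log 2 n * max 1 (log 2 (1 / \<delta>))"
      using assms by (intro sketch_space_le[OF _ _ _ _ _ _ _ nb_def L_def cap_def]) auto
    fix xs
    assume xs: "valid_stream n xs \<and> length xs \<le> n ^ k \<and> rfds \<alpha> n xs"
    have "n ^ k \<le> 2 ^ (L - 1)"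
      using power_mono[OF n_le, of k] by (simp add: L_def power_mult[symmetric] mult.commute)
    then show "1 - \<delta> \<le> measure_pmf.prob (out_dist (sketch_alg cap L n) xs)
        {x. \<bar>x - F1 n (freq_g xs)\<bar> \<le> \<epsilon> * F1 n (freq_g xs)}"
      using xs assms
      by (intro sketch_alg_correct[where \<alpha> = \<alpha> and \<epsilon> = \<epsilon> and \<delta> = \<delta>])
         (auto simp: L_def cap_def sketch_cap_def)
  qed
qed

theorem mainTheorem7:
  "\<forall>k::nat. \<exists>C>0. \<forall>(n::nat) (\<epsilon>::real) (\<alpha>::real) (\<delta>::real).
     n \<ge> 2 \<and> 0 < \<epsilon> \<and> \<epsilon> < 1/2 \<and> 0 < \<alpha> \<and> \<alpha> < 1 \<and> 0 < \<delta> \<and> \<delta> < 1 \<longrightarrow>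
     (\<exists>A b. uses_bits A b \<and>
        real b \<le> C * (1 / (1 - \<alpha>)) * (1 / \<epsilon>^2) * log 2 n * max 1 (log 2 (1 / \<delta>)) \<and>
        (\<forall>xs. valid_stream n xs \<and> length xs \<le> n ^ k \<and> rfds \<alpha> n xs \<longrightarrow>
           measure_pmf.prob (out_dist A xs)
             {x. \<bar>x - F1 n (freq_g xs)\<bar> \<le> \<epsilon> * F1 n (freq_g xs)} \<ge> 1 - \<delta>))"
proof -
  have "0 < 200 * (real k + 2)" for k :: nat
    by simp
  then show ?thesis
    using F1_sketch_exists by blast
qed

end
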